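(* Let $V=\{0,1,2,3,4\}$ and $\mathcal{E}=\{(0,1),(1,2),(1,3),(2,4),(3,4)\}$. Let $A$ be the $|V|\times|\mathcal{E}|$ node–arc incidence matrix of the directed graph $(V,\mathcal{E})$ (for node $v$ and arc $e$, $A_{v,e}=1$ if $e$ leaves $v$, $A_{v,e}=-1$ if $e$ enters $v$, and $0$ otherwise), let $B$ be the $|\mathcal{E}|\times|V|$ matrix with $B_{(i,j),i}=1$ for each $(i,j)\in\mathcal{E}$ and all other entries $0$, let $I_{\mathcal{E}}$ and $I_V$ be identity matrices of dimensions $|\mathcal{E}|$ and $|V|$, and let $e_V^T$ be the $1\times|V|$ row vector of ones. Then the block matrix \[ C=\begin{pmatrix} A & 0 & 0\\ 0 & I_{\mathcal{E}} & -B\\ -I_{\mathcal{E}} & I_{\mathcal{E}} & 0\\ 0 & 0 & e_V^T\\ 0 & 0 & I_V\end{pmatrix}, \] whose three column blocks correspond to variables $\alpha\in\mathbb{R}^{\mathcal{E}}$, $w\in\mathbb{R}^{\mathcal{E}}$, $\delta\in\mathbb{R}^{V}$, is not totally unimodular.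
   Context: $C$ is the constraint matrix of the linearised adversarial sub-problem (a longest-path problem with up to $\Gamma$ units of delay) of the two-stage robust resource-constrained project scheduling problem, restricted to the arcs $\mathcal{E}$ of the extended project network: the row blocks correspond respectively to flow-conservation/source/sink constraints on $\alpha$, the constraints $w_{ij}\le\delta_i$, the constraints $w_{ij}\le\alpha_{ij}$, the budget constraint $\sum_i\delta_i\le\Gamma$, and the bounds $\delta_i\le1$. A matrix is totally unimodular if every square submatrix has determinant in $\{-1,0,1\}$. *)

theory Defs
  imports "Jordan_Normal_Form.DL_Submatrix" "Jordan_Normal_Form.Determinant"
begin

definition totally_unimodular :: "int mat \<Rightarrow> bool" where
  "totally_unimodular M \<longleftrightarrow>
     (\<forall>I J. I \<subseteq> {..<dim_row M} \<longrightarrow> J \<subseteq> {..<dim_col M} \<longrightarrow> card I = card J \<longrightarrow>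
        det (submatrix M I J) \<in> {-1, 0, 1})"

text \<open>Digraph on nodes {0..<n} with arc list E; arc e is E ! e = (tail, head).\<close>
definition incidence_mat :: "nat \<Rightarrow> (nat \<times> nat) list \<Rightarrow> int mat" where
  "incidence_mat n E = mat n (length E)
     (\<lambda>(v, e). if fst (E ! e) = v then 1 else if snd (E ! e) = v then -1 else 0)"

definition tail_mat :: "nat \<Rightarrow> (nat \<times> nat) list \<Rightarrow> int mat" where
  "tail_mat n E = mat (length E) n (\<lambda>(e, v). if fst (E ! e) = v then 1 else 0)"

text \<open>The block matrix C: columns are (alpha in R^E, w in R^E, delta in R^V);
  row blocks are [A 0 0; 0 I -B; -I I 0; 0 0 e^T; 0 0 I_V].\<close>
definition C_mat :: "nat \<Rightarrow> (nat \<times> nat) list \<Rightarrow> int mat" where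
  "C_mat n E = (let m = length E; A = incidence_mat n E; B = tail_mat n E in
     mat (n + m + m + 1 + n) (m + m + n) (\<lambda>(r, c).
       if r < n then (if c < m then A $$ (r, c) else 0)
       else if r < n + m then
         (let e = r - n in
           if c < m then 0
           else if c < m + m then (if c - m = e then 1 else 0)
           else - (B $$ (e, c - (m + m))))
       else if r < n + m + m then
         (let e = r - (n + m) in
           if c < m then (if c = e then -1 else 0)
           else if c < m + m then (if c - m = e then 1 else 0)
           else 0)
       else if r = n + m + m then (if m + m \<le> c then 1 else 0)
       else
         (let v = r - (n + m + m + 1) in
           if m + m \<le> c \<and> c - (m + m) = v then 1 else 0)))"

definition example_arcs :: "(nat \<times> nat) list" where
  "example_arcs = [(0,1),(1,2),(1,3),(2,4),(3,4)]"

end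

theory Submission
  imports Defs
begin

text \<open>If two arcs \<open>a < b\<close> leave the same node \<open>v\<close>, take the rows of \<open>C\<close> for flow conservation
  at \<open>v\<close>, for \<open>w\<^sub>a \<le> \<delta>\<^sub>v\<close>, \<open>w\<^sub>b \<le> \<delta>\<^sub>v\<close>, \<open>w\<^sub>a \<le> \<alpha>\<^sub>a\<close>, \<open>w\<^sub>b \<le> \<alpha>\<^sub>b\<close>, and the columns of
  \<open>\<alpha>\<^sub>a, \<alpha>\<^sub>b, w\<^sub>a, w\<^sub>b, \<delta>\<^sub>v\<close>. Every row and column of this 5 \<times> 5 submatrix has exactly two
  nonzero entries, which link up into a single cycle through all of them; its two perfect
  matchings both contribute \<open>+1\<close> to the determinant, which is therefore 2.
  Node 1 of the example has the two outgoing arcs (1,2) and (1,3).\<close>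

lemma pick_set_sorted:
  assumes "sorted_wrt (<) xs" and "k < length xs"
  shows "pick (set xs) k = xs ! k"
proof -
  have less_iff: "xs ! i < xs ! k \<longleftrightarrow> i < k" if "i < length xs" for i
    using that assms(2) sorted_wrt_nth_less[OF assms(1), of i k] sorted_wrt_nth_less[OF assms(1), of k i]
    by (cases i k rule: linorder_cases) auto
  have "{a \<in> set xs. a < xs ! k} = (!) xs ` {0..<k}"
  proof
    show "{a \<in> set xs. a < xs ! k} \<subseteq> (!) xs ` {0..<k}"
      by (auto simp: in_set_conv_nth less_iff)
    show "(!) xs ` {0..<k} \<subseteq> {a \<in> set xs. a < xs ! k}"
      using assms(2) by (auto simp: less_iff)
  qed
  also have "\<dots> = set (take k xs)"
    using assms(2) by (simp add: nth_image)
  finally have "card {a \<in> set xs. a < xs ! k} = k"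
    using assms by (simp add: distinct_card strict_sorted_iff)
  then show ?thesis
    using pick_card_in_set[of "xs ! k" "set xs"] assms(2) by simp
qed

lemma submatrix_set_sorted:
  assumes "sorted_wrt (<) rs" "sorted_wrt (<) cs"
    and "\<forall>r \<in> set rs. r < dim_row A" "\<forall>c \<in> set cs. c < dim_col A"
  shows "submatrix A (set rs) (set cs) =
    mat (length rs) (length cs) (\<lambda>(i, j). A $$ (rs ! i, cs ! j))"
proof -
  have "{r. r < dim_row A \<and> r \<in> set rs} = set rs" "{c. c < dim_col A \<and> c \<in> set cs} = set cs"
    using assms(3,4) by auto
  moreover have "card (set rs) = length rs" "card (set cs) = length cs"
    using assms(1,2) by (simp_all add: strict_sorted_iff distinct_card)
  ultimately show ?thesis
    using assms(1,2) by (intro eq_matI) (simp_all add: submatrix_def pick_set_sorted)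
qed

lemma det_mat_Suc:
  "det (mat (Suc n) (Suc n) f) = (\<Sum>j<Suc n. (f (0, j) :: 'a :: comm_ring_1) * (-1) ^ j *
     det (mat n n (\<lambda>(a, b). f (Suc a, if b < j then b else Suc b))))"
proof -
  have "det (mat (Suc n) (Suc n) f) =
      (\<Sum>j<Suc n. mat (Suc n) (Suc n) f $$ (0, j) * cofactor (mat (Suc n) (Suc n) f) 0 j)"
    by (rule laplace_expansion_row) auto
  also have "\<dots> = (\<Sum>j<Suc n. f (0, j) * (-1) ^ j *
      det (mat n n (\<lambda>(a, b). f (Suc a, if b < j then b else Suc b))))"
  proof (rule sum.cong[OF refl])
    fix j
    assume "j \<in> {..<Suc n}"
    moreover have "mat_delete (mat (Suc n) (Suc n) f) 0 j =
        mat n n (\<lambda>(a, b). f (Suc a, if b < j then b else Suc b))"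
      by (rule eq_matI) (auto simp: mat_delete_def)
    ultimately show "mat (Suc n) (Suc n) f $$ (0, j) * cofactor (mat (Suc n) (Suc n) f) 0 j =
        f (0, j) * (-1) ^ j * det (mat n n (\<lambda>(a, b). f (Suc a, if b < j then b else Suc b)))"
      by (simp add: cofactor_def)
  qed
  finally show ?thesis .
qed

definition cycle_minor :: "int mat" where
  "cycle_minor = mat_of_rows_list 5
     [[ 1,  1, 0, 0,  0],
      [ 0,  0, 1, 0, -1],
      [ 0,  0, 0, 1, -1],
      [-1,  0, 1, 0,  0],
      [ 0, -1, 0, 1,  0]]"

lemma det_cycle_minor: "det cycle_minor = 2"
proof -
  \<comment> \<open>Keeps the simplifier from expanding the minors for a symbolic summation index.\<close>
  have sum_set_cong: "\<And>A B f. A = B \<Longrightarrow> sum f A = sum f B"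
    by simp
  show ?thesis
    by (simp add: cycle_minor_def mat_of_rows_list_def numeral_eq_Suc det_mat_Suc cong: sum_set_cong)
qed

lemma dim_C_mat [simp]:
  "dim_row (C_mat n E) = n + length E + length E + 1 + n"
  "dim_col (C_mat n E) = length E + length E + n"
  by (simp_all add: C_mat_def Let_def)

lemma submatrix_C_mat_branching:
  assumes "v < n" "a < b" "b < length E" "fst (E ! a) = v" "fst (E ! b) = v"
  defines "m \<equiv> length E"
  shows "submatrix (C_mat n E) {v, n + a, n + b, n + m + a, n + m + b}
      {a, b, m + a, m + b, m + m + v} = cycle_minor"
proof -
  have "submatrix (C_mat n E) (set [v, n + a, n + b, n + m + a, n + m + b])
      (set [a, b, m + a, m + b, m + m + v]) =
    mat 5 5 (\<lambda>(i, j). C_mat n E $$ ([v, n + a, n + b, n + m + a, n + m + b] ! i,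
      [a, b, m + a, m + b, m + m + v] ! j))"
    using assms by (subst submatrix_set_sorted) auto
  also have "\<dots> = cycle_minor"
  proof (rule eq_matI)
    fix i j
    assume "i < dim_row cycle_minor" "j < dim_col cycle_minor"
    then have "i < Suc (Suc (Suc (Suc (Suc 0))))" "j < Suc (Suc (Suc (Suc (Suc 0))))"
      by (simp_all add: cycle_minor_def mat_of_rows_list_def)
    then show "mat 5 5 (\<lambda>(i, j). C_mat n E $$ ([v, n + a, n + b, n + m + a, n + m + b] ! i,
        [a, b, m + a, m + b, m + m + v] ! j)) $$ (i, j) = cycle_minor $$ (i, j)"
      unfolding less_Suc_eq not_less0 simp_thms
      by (elim disjE) (use assms(1-5) in \<open>simp_all add: m_def cycle_minor_def
        mat_of_rows_list_def C_mat_def Let_def incidence_mat_def tail_mat_def\<close>)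
  qed (simp_all add: cycle_minor_def mat_of_rows_list_def)
  finally show ?thesis
    by simp
qed

lemma totally_unimodularD:
  assumes "totally_unimodular M" "I \<subseteq> {..<dim_row M}" "J \<subseteq> {..<dim_col M}" "card I = card J"
  shows "det (submatrix M I J) \<in> {-1, 0, 1}"
  using assms unfolding totally_unimodular_def by blast

theorem C_mat_not_totally_unimodular:
  assumes "v < n" "a < length E" "b < length E" "a \<noteq> b" "fst (E ! a) = v" "fst (E ! b) = v"
  shows "\<not> totally_unimodular (C_mat n E)"
proof
  assume TU: "totally_unimodular (C_mat n E)"
  obtain c d where cd: "c < d" "d < length E" "fst (E ! c) = v" "fst (E ! d) = v"
    using assms by (metis linorder_neq_iff)
  let ?m = "length E"
  let ?I = "{v, n + c, n + d, n + ?m + c, n + ?m + d}"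
  let ?J = "{c, d, ?m + c, ?m + d, ?m + ?m + v}"
  have "?I \<subseteq> {..<dim_row (C_mat n E)}" "?J \<subseteq> {..<dim_col (C_mat n E)}"
    using assms(1) cd by auto
  moreover have "card ?I = card ?J"
    using assms(1) cd by (auto simp: card_insert_if)
  ultimately have "det (submatrix (C_mat n E) ?I ?J) \<in> {-1, 0, 1}"
    by (rule totally_unimodularD[OF TU])
  then show False
    using submatrix_C_mat_branching[OF assms(1) cd] det_cycle_minor by simp
qed

theorem mainTheorem2:
  shows "\<not> totally_unimodular (C_mat 5 example_arcs)"
  by (rule C_mat_not_totally_unimodular[where v = 1 and a = 1 and b = 2])
    (simp_all add: example_arcs_def)

end
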